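(* Let $\mathcal{S}_{\mathbb{R}}$ be the class of functions $f(z)=z+\sum_{n\ge2}a_nz^n$ in $\mathcal{S}$ all of whose coefficients $a_n$ are real. Then the harmonic analogue of $\mathcal{S}_{\mathbb{R}}$ is $\mathcal{S}_{\mathbb{R}}$ itself; that is, a harmonic function $f=h+\bar g$ ($h,g$ analytic in $\mathbb{D}$) satisfies $h+\epsilon g\in\mathcal{S}_{\mathbb{R}}$ for every $|\epsilon|=1$ if and only if $g\equiv0$ and $h\in\mathcal{S}_{\mathbb{R}}$.
   Context: $\mathbb{D}$ is the open unit disk. $\mathcal{S}$ is the class of analytic univalent functions $f$ in $\mathbb{D}$ with $f(0)=0$, $f'(0)=1$. For $\mathcal{G}\subset\mathcal{S}$, its harmonic analogue is the class of harmonic $f=h+\bar g$ ($h,g$ analytic in $\mathbb{D}$) such that $h+\epsilon g\in\mathcal{G}$ for every $\epsilon\in\mathbb{C}$ with $|\epsilon|=1$. *)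

theory Defs
  imports "HOL-Complex_Analysis.Complex_Analysis"
begin

definition class_S :: "(complex \<Rightarrow> complex) set" where
  "class_S = {f. f holomorphic_on ball 0 1 \<and> inj_on f (ball 0 1) \<and> f 0 = 0 \<and> deriv f 0 = 1}"

definition class_S_R :: "(complex \<Rightarrow> complex) set" where
  "class_S_R = {f. f \<in> class_S \<and> (\<forall>n. (deriv ^^ n) f 0 / fact n \<in> \<real>)}"

text \<open>Harmonic analogue of a class G, represented by pairs (h,g) with f = h + conj g.\<close>
definition harmonic_analogue :: "(complex \<Rightarrow> complex) set \<Rightarrow> ((complex \<Rightarrow> complex) \<times> (complex \<Rightarrow> complex)) set" where
  "harmonic_analogue G = {(h, g). h holomorphic_on ball 0 1 \<and> g holomorphic_on ball 0 1 \<and>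
      (\<forall>\<epsilon>::complex. norm \<epsilon> = 1 \<longrightarrow> (\<lambda>z. h z + \<epsilon> * g z) \<in> G)}"

end

theory Submission
  imports Defs
begin

(* The n-th Taylor coefficient of h + e g at 0 is a_n + e b_n, where a_n and b_n are those
   of h and g. If it is real for e = 1, -1 and i, then b_n = 0; so all Taylor coefficients
   of g vanish and g = 0 on the disk by the identity theorem. Conversely, if g = 0 then every
   h + e g coincides with h on the disk. *)

lemma class_S_R_cong:
  assumes "\<And>z. z \<in> ball 0 1 \<Longrightarrow> p z = q z" and "p \<in> class_S_R"
  shows "q \<in> class_S_R"
proof -
  have ev: "\<forall>\<^sub>F z in nhds 0. p z = q z"
    using eventually_nhds_in_open[of "ball (0::complex) 1" 0] assms(1)
    by (auto elim!: eventually_mono)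
  have "(deriv ^^ n) p 0 = (deriv ^^ n) q 0" for n
    by (rule higher_deriv_cong_ev[OF ev refl])
  moreover have "deriv p 0 = deriv q 0"
    by (rule deriv_cong_ev[OF ev refl])
  moreover have "q holomorphic_on ball 0 1" "inj_on q (ball 0 1)" "q 0 = 0"
    using assms holomorphic_cong[of "ball 0 1" "ball 0 1" p q] inj_on_cong[of "ball 0 1" p q]
    by (auto simp: class_S_R_def class_S_def)
  ultimately show ?thesis
    using assms(2) by (auto simp: class_S_R_def class_S_def)
qed

lemma higher_deriv_add_cmult:
  assumes "f holomorphic_on S" "g holomorphic_on S" "open S" "z \<in> S"
  shows "(deriv ^^ n) (\<lambda>w. f w + c * g w) z = (deriv ^^ n) f z + c * (deriv ^^ n) g z"
proof -
  have "(\<lambda>w. c * g w) holomorphic_on S"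
    using assms(2) by (intro holomorphic_intros)
  then have "(deriv ^^ n) (\<lambda>w. f w + c * g w) z = (deriv ^^ n) f z + (deriv ^^ n) (\<lambda>w. c * g w) z"
    using assms by (intro higher_deriv_add)
  also have "(deriv ^^ n) (\<lambda>w. c * g w) z = c * (deriv ^^ n) g z"
    using assms by (intro higher_deriv_cmult)
  finally show ?thesis .
qed

lemma eq_0_if_real_for_all_unimodular:
  fixes a b :: complex
  assumes "\<And>e. norm e = 1 \<Longrightarrow> a + e * b \<in> \<real>"
  shows "b = 0"
proof -
  have "a + b \<in> \<real>" "a - b \<in> \<real>" "a + \<i> * b \<in> \<real>"
    using assms[of 1] assms[of "-1"] assms[of \<i>] by simp_all
  then have "Im a + Im b = 0" "Im a - Im b = 0" "Im a + Re b = 0"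
    by (auto simp: complex_is_Real_iff)
  then show "b = 0"
    by (simp add: complex_eq_iff)
qed

theorem theorem3p10:
  fixes h g :: "complex \<Rightarrow> complex"
  assumes "h holomorphic_on ball 0 1" and "g holomorphic_on ball 0 1"
  shows "(h, g) \<in> harmonic_analogue class_S_R \<longleftrightarrow>
           ((\<forall>z\<in>ball 0 1. g z = 0) \<and> h \<in> class_S_R)"
proof
  assume "(h, g) \<in> harmonic_analogue class_S_R"
  then have mem: "\<And>e. norm e = 1 \<Longrightarrow> (\<lambda>z. h z + e * g z) \<in> class_S_R"
    by (auto simp: harmonic_analogue_def)
  have "(deriv ^^ n) g 0 / fact n = 0" for n
  proof (rule eq_0_if_real_for_all_unimodular)
    fix e :: complex
    assume "norm e = 1"
    then have "(deriv ^^ n) (\<lambda>z. h z + e * g z) 0 / fact n \<in> \<real>"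
      using mem[of e] by (simp add: class_S_R_def)
    then show "(deriv ^^ n) h 0 / fact n + e * ((deriv ^^ n) g 0 / fact n) \<in> \<real>"
      using higher_deriv_add_cmult[OF assms, of 0 n e] by (simp add: add_divide_distrib)
  qed
  then have g0: "\<forall>z\<in>ball 0 1. g z = 0"
    using holomorphic_fun_eq_0_on_ball[OF assms(2)] by simp
  moreover have "h \<in> class_S_R"
    using class_S_R_cong[OF _ mem[of 1]] g0 by simp
  ultimately show "(\<forall>z\<in>ball 0 1. g z = 0) \<and> h \<in> class_S_R" ..
next
  assume "(\<forall>z\<in>ball 0 1. g z = 0) \<and> h \<in> class_S_R"
  then show "(h, g) \<in> harmonic_analogue class_S_R"
    using assms by (auto simp: harmonic_analogue_def intro: class_S_R_cong[of h])
qed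

end
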